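(* Let $\mathbb{A}$, $\mathbb{S}$ and $\mathbb{B}$ be complete Banach spaces with norms $\|\cdot\|_{\mathbb{A}},\|\cdot\|_{\mathbb{S}},\|\cdot\|_{\mathbb{B}}$, where $\mathbb{A}$ is compact, $\mathbb{S}$ is separable, and $\mathbb{B}_0\subset\mathbb{B}$ is separable. Let $\mathcal{X}\subset\mathbb{A}\times\mathbb{S}$ be closed. Let $P(\cdot\mid s,a)$ be a transition kernel such that for every $(a,s)\in\mathcal{X}$ a draw $S'(s,a)\sim P(\cdot\mid s,a)$ lies in $\mathbb{S}$ with probability one. For every $((a,s),s')\in\mathcal{X}\times\mathbb{S}$ let $\tilde R(s,a,s')$ be a random reward with $P(\tilde R(s,a,s')\in\mathbb{B}_0)=1$, drawn independently each time it is drawn. Let $\pi$ be a feasible policy, writing $\pi(s')$ for the action it selects at state $s'$, where feasibility means $(\pi(s'),s')\in\mathcal{X}$ (almost surely) for every $s'\in\mathbb{S}$. Let $0\le\gamma<1$. For $j=1,2$ and every $(a,s)\in\mathcal{X}$ let $V_j^*(s,a)$ be a random variable taking values in $\mathbb{B}_0$ with probability one, and define $$Z_j^*(s,a)=\tilde R\big(s,a,S'(s,a)\big)+\gamma\, V_j^*\Big(S'(s,a),\pi\big(S'(s,a)\big)\Big),$$ where, conditionally on $S'(s,a)=s'$, the reward $\tilde R(s,a,s')$ is independent of $V_j^*(s',\pi(s'))$. Then $$\sup_{(a,s)\in\mathcal{X}} d_{BL_1^*}\big(Z_1^*(s,a),Z_2^*(s,a)\big)\le \gamma\sup_{(a,s)\in\mathcal{X}}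 d_{BL_1^*}\big(V_1^*(s,a),V_2^*(s,a)\big).$$
   Context: $BL_1^*(\mathbb{B}_0)$ denotes the set of all functions $f:\mathbb{B}_0\to\mathbb{R}$ with Lipschitz seminorm $\sup_{x\neq y}|f(x)-f(y)|/\|x-y\|_{\mathbb{B}}\le 1$. For random variables $U,V$ with values in $\mathbb{B}_0$ (identified with their laws), $d_{BL_1^*}(U,V)=\sup_{f\in BL_1^*(\mathbb{B}_0)}\big(E f(U)-E f(V)\big)$; by the Kantorovich–Rubinstein theorem this equals the $1$-Wasserstein distance $\inf_{\lambda}E_\lambda\|U-V\|_{\mathbb{B}}$ over couplings $\lambda$ of the two laws. *)

theory Defs
  imports "HOL-Probability.Probability"
begin

definition dBL :: "'b::real_normed_vector measure \<Rightarrow> 'b measure \<Rightarrow> ereal" where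
  "dBL U V = (SUP f \<in> {f. 1-lipschitz_on UNIV f \<and> integrable U f \<and> integrable V f}.
                ereal (integral\<^sup>L U f - integral\<^sup>L V f))"

text \<open>Law of Z(s,a) = R(s,a,S') + gamma * V(S', pi S') with S' ~ P(s,a), and,
  conditionally on S' = s', the reward independent of V(s', pi s') (product law).
  The completion makes the sum map measurable also when the space is not separable
  (the laws are concentrated on a separable subset).\<close>
definition Zlaw ::
  "('s \<Rightarrow> 'a \<Rightarrow> 's measure) \<Rightarrow> ('s \<Rightarrow> 'a \<Rightarrow> 's \<Rightarrow> 'b::real_normed_vector measure)
   \<Rightarrow> ('s \<Rightarrow> 'a \<Rightarrow> 'b measure) \<Rightarrow> ('s \<Rightarrow> 'a) \<Rightarrow> real \<Rightarrow> 's \<Rightarrow> 'a \<Rightarrow> 'b measure" where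
  "Zlaw P R V \<pi> \<gamma> s a =
     P s a \<bind> (\<lambda>s'. distr (completion (R s a s' \<Otimes>\<^sub>M V s' (\<pi> s'))) borel
                         (\<lambda>(r, v). r + \<gamma> *\<^sub>R v))"

end

theory Submission
  imports Defs
begin

text \<open>Conditionally on \<open>S' = s'\<close> the reward and the continuation value are independent, so
  \<open>Z\<^sub>j(s, a)\<close> is a mixture, over \<open>s' \<sim> P(s, a)\<close> and \<open>r \<sim> R(s, a, s')\<close>, of the laws of
  \<open>r + \<gamma> V\<^sub>j(s', \<pi> s')\<close>. For a 1-Lipschitz \<open>F\<close> the map \<open>v \<mapsto> F (r + \<gamma> v) / \<gamma>\<close> is again
  1-Lipschitz, so \<open>E F(r + \<gamma> V\<^sub>1) - E F(r + \<gamma> V\<^sub>2) \<le> \<gamma> d(V\<^sub>1, V\<^sub>2)\<close>, and such a bound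
  survives integration over \<open>r\<close> and \<open>s'\<close>. The technical difficulty is measurability: in a
  non-separable Banach space addition is not measurable for the product of the Borel
  \<open>\<sigma>\<close>-algebras, so everything is restricted to the closure of a countable dense subset of
  \<open>B\<^sub>0\<close>, which carries all the laws involved.\<close>

section \<open>Measurability on separable products\<close>

lemma open_Int_Times_separable_in_pair_borel:
  fixes W :: "('a::metric_space \<times> 'b::metric_space) set"
  assumes D1: "countable D1" "C1 \<subseteq> closure D1" and D2: "countable D2" "C2 \<subseteq> closure D2"
    and W: "open W"
  shows "\<exists>U \<in> sets (borel \<Otimes>\<^sub>M borel). W \<inter> (C1 \<times> C2) = U \<inter> (C1 \<times> C2)"
proof -
  define box where "box d1 d2 n = ball d1 (1 / Suc n) \<times> ball d2 (1 / Suc n)"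
    for d1 :: 'a and d2 :: 'b and n :: nat
  define U where
    "U = (\<Union>(d1, d2, n) \<in> D1 \<times> D2 \<times> UNIV. if box d1 d2 n \<subseteq> W then box d1 d2 n else {})"
  have "U \<in> sets (borel \<Otimes>\<^sub>M borel)"
    unfolding U_def using D1 D2
    by (intro sets.countable_UN'') (auto simp: box_def intro!: pair_measureI)
  moreover have "W \<inter> (C1 \<times> C2) \<subseteq> U"
  proof clarify
    fix x y assume xy: "(x, y) \<in> W" "x \<in> C1" "y \<in> C2"
    obtain e where e: "e > 0" "ball (x, y) e \<subseteq> W"
      using W xy(1) open_contains_ball by blast
    obtain n :: nat where n: "1 / Suc n < e / 4"
      using reals_Archimedean[of "e / 4"] e(1) by (auto simp: inverse_eq_divide)
    have r: "(0::real) < 1 / Suc n" by simp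
    obtain d1 where d1: "d1 \<in> D1" "dist d1 x < 1 / Suc n"
      using D1(2) xy(2) closure_approachable r by blast
    obtain d2 where d2: "d2 \<in> D2" "dist d2 y < 1 / Suc n"
      using D2(2) xy(3) closure_approachable r by blast
    have "box d1 d2 n \<subseteq> ball (x, y) e"
    proof clarify
      fix a b assume "(a, b) \<in> box d1 d2 n"
      then have "dist d1 a < 1 / Suc n" "dist d2 b < 1 / Suc n"
        by (auto simp: box_def)
      then have "dist x a < e / 2" "dist y b < e / 2"
        using d1(2) d2(2) n dist_triangle[of x a d1] dist_triangle[of y b d2]
        by (simp_all add: dist_commute)
      then show "(a, b) \<in> ball (x, y) e"
        using dist_Pair_Pair[of x y a b] sqrt_sum_squares_le_sum_abs[of "dist x a" "dist y b"]
        by simp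
    qed
    moreover have "(x, y) \<in> box d1 d2 n"
      using d1 d2 by (simp add: box_def dist_commute)
    ultimately have "(x, y) \<in> (if box d1 d2 n \<subseteq> W then box d1 d2 n else {})"
      using e(2) by auto
    then show "(x, y) \<in> U"
      unfolding U_def using d1(1) d2(1) by (intro UN_I[of "(d1, d2, n)"]) auto
  qed
  moreover have "U \<subseteq> W"
    unfolding U_def by (auto split: if_splits)
  ultimately show ?thesis
    by (intro bexI[of _ U]) auto
qed

lemma borel_measurable_restrict_Times_separable:
  fixes g :: "'a::metric_space \<times> 'b::metric_space \<Rightarrow> 'c::topological_space"
  assumes D1: "countable D1" "C1 \<subseteq> closure D1" and D2: "countable D2" "C2 \<subseteq> closure D2"
    and g: "continuous_on (C1 \<times> C2) g"
  shows "g \<in> borel_measurable (restrict_space (borel \<Otimes>\<^sub>M borel) (C1 \<times> C2))"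
proof (rule borel_measurableI)
  fix S :: "'c set" assume "open S"
  then obtain W where "open W" "W \<inter> (C1 \<times> C2) = g -` S \<inter> (C1 \<times> C2)"
    using g continuous_on_open_invariant by metis
  moreover obtain U where "U \<in> sets (borel \<Otimes>\<^sub>M borel)" "W \<inter> (C1 \<times> C2) = U \<inter> (C1 \<times> C2)"
    using open_Int_Times_separable_in_pair_borel[OF D1 D2 \<open>open W\<close>] by blast
  ultimately show "g -` S \<inter> space (restrict_space (borel \<Otimes>\<^sub>M borel) (C1 \<times> C2))
      \<in> sets (restrict_space (borel \<Otimes>\<^sub>M borel) (C1 \<times> C2))"
    by (auto simp: sets_restrict_space space_restrict_space space_pair_measure)
qed

lemma measurable_completion_AE_restrict:
  assumes A: "A \<in> sets M" "AE x in M. x \<in> A"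
    and f: "f \<in> restrict_space M A \<rightarrow>\<^sub>M N" "f \<in> space M \<rightarrow> space N"
  shows "f \<in> completion M \<rightarrow>\<^sub>M N"
proof (rule measurableI)
  show "x \<in> space (completion M) \<Longrightarrow> f x \<in> space N" for x
    using f(2) by auto
  fix X assume "X \<in> sets N"
  then have "f -` X \<inter> (A \<inter> space M) \<in> sets M"
    using measurable_sets[OF f(1)] A(1) by (simp add: sets_restrict_space_iff space_restrict_space)
  moreover have "AE x in completion M. x \<in> f -` X \<inter> (A \<inter> space M) \<longleftrightarrow> x \<in> f -` X \<inter> space M"
    using AE_completion[OF A(2)] by eventually_elim auto
  ultimately show "f -` X \<inter> space (completion M) \<in> sets (completion M)"
    using completion.in_sets_AE by (metis Int_lower2 sets_completionI_sets space_completion)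
qed

text \<open>The inequality \<open>\<integral>f \<partial>M1 - \<integral>f \<partial>M2 \<le> c\<close>, rearranged so that only the integrals of the
  positive and negative parts of \<open>f\<close> occur; it makes sense without integrability.\<close>
definition nn_integral_diff_le :: "'a measure \<Rightarrow> 'a measure \<Rightarrow> ('a \<Rightarrow> real) \<Rightarrow> real \<Rightarrow> bool" where
  "nn_integral_diff_le M1 M2 f c \<longleftrightarrow>
     (\<integral>\<^sup>+x. ennreal (f x) \<partial>M1) + (\<integral>\<^sup>+x. ennreal (- f x) \<partial>M2)
       \<le> ennreal c + (\<integral>\<^sup>+x. ennreal (- f x) \<partial>M1) + (\<integral>\<^sup>+x. ennreal (f x) \<partial>M2)"

lemma nn_integral_diff_le_iff:
  assumes "integrable M1 f" "integrable M2 f" "0 \<le> c"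
  shows "nn_integral_diff_le M1 M2 f c \<longleftrightarrow> (\<integral>x. f x \<partial>M1) - (\<integral>x. f x \<partial>M2) \<le> c"
proof -
  obtain a1 b1 where "0 \<le> a1" "0 \<le> b1" "(\<integral>\<^sup>+x. ennreal (f x) \<partial>M1) = ennreal a1"
    "(\<integral>\<^sup>+x. ennreal (- f x) \<partial>M1) = ennreal b1" "(\<integral>x. f x \<partial>M1) = a1 - b1"
    using integrableE[OF assms(1)] by metis
  moreover obtain a2 b2 where "0 \<le> a2" "0 \<le> b2" "(\<integral>\<^sup>+x. ennreal (f x) \<partial>M2) = ennreal a2"
    "(\<integral>\<^sup>+x. ennreal (- f x) \<partial>M2) = ennreal b2" "(\<integral>x. f x \<partial>M2) = a2 - b2"
    using integrableE[OF assms(2)] by metis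
  ultimately show ?thesis
    using \<open>0 \<le> c\<close> unfolding nn_integral_diff_le_def
    by (simp add: ennreal_plus[symmetric] ennreal_le_iff del: ennreal_plus) linarith
qed

lemma nn_integral_add_le_AE:
  assumes "prob_space M"
    and [measurable]: "f1 \<in> borel_measurable M" "g1 \<in> borel_measurable M"
      "f2 \<in> borel_measurable M" "g2 \<in> borel_measurable M"
    and "AE x in M. f1 x + g2 x \<le> ennreal c + g1 x + f2 x"
  shows "(\<integral>\<^sup>+x. f1 x \<partial>M) + (\<integral>\<^sup>+x. g2 x \<partial>M) \<le> ennreal c + (\<integral>\<^sup>+x. g1 x \<partial>M) + (\<integral>\<^sup>+x. f2 x \<partial>M)"
proof -
  have "(\<integral>\<^sup>+x. f1 x \<partial>M) + (\<integral>\<^sup>+x. g2 x \<partial>M) = (\<integral>\<^sup>+x. f1 x + g2 x \<partial>M)"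
    by (simp add: nn_integral_add)
  also have "\<dots> \<le> (\<integral>\<^sup>+x. ennreal c + g1 x + f2 x \<partial>M)"
    by (rule nn_integral_mono_AE) fact
  also have "\<dots> = ennreal c + (\<integral>\<^sup>+x. g1 x \<partial>M) + (\<integral>\<^sup>+x. f2 x \<partial>M)"
    using prob_space.emeasure_space_1[OF \<open>prob_space M\<close>] by (simp add: nn_integral_add)
  finally show ?thesis .
qed

lemma nn_integral_diff_le_bind:
  assumes "prob_space P"
    and K1: "K1 \<in> P \<rightarrow>\<^sub>M subprob_algebra N" and K2: "K2 \<in> P \<rightarrow>\<^sub>M subprob_algebra N"
    and f: "f \<in> borel_measurable N"
    and "AE s in P. nn_integral_diff_le (K1 s) (K2 s) f c"
  shows "nn_integral_diff_le (P \<bind> K1) (P \<bind> K2) f c"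
proof -
  have f_pm: "(\<lambda>x. ennreal (f x)) \<in> borel_measurable N" "(\<lambda>x. ennreal (- f x)) \<in> borel_measurable N"
    using f by measurable
  have "(\<lambda>s. \<integral>\<^sup>+x. g x \<partial>K s) \<in> borel_measurable P"
    if "g \<in> borel_measurable N" "K \<in> P \<rightarrow>\<^sub>M subprob_algebra N" for g K
    using measurable_compose[OF that(2) nn_integral_measurable_subprob_algebra[OF that(1)]] .
  with f_pm K1 K2 show ?thesis
    using assms(5) unfolding nn_integral_diff_le_def
    by (simp add: nn_integral_bind[OF _ K1] nn_integral_bind[OF _ K2]
        nn_integral_add_le_AE[OF \<open>prob_space P\<close>])
qed

lemma AE_integrable_bind:
  fixes f :: "'b \<Rightarrow> real"
  assumes "prob_space P" and K: "K \<in> P \<rightarrow>\<^sub>M subprob_algebra N" and int: "integrable (P \<bind> K) f"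
  shows "AE s in P. integrable (K s) f"
proof -
  have sets: "sets (P \<bind> K) = sets N"
    using prob_space.not_empty[OF \<open>prob_space P\<close>] sets_kernel[OF K] by simp
  then have f: "f \<in> borel_measurable N"
    using int measurable_cong_sets[OF sets refl] by auto
  have "AE s in P. (\<integral>\<^sup>+x. g x \<partial>K s) \<noteq> \<infinity>"
    if "g \<in> borel_measurable N" "(\<integral>\<^sup>+x. g x \<partial>(P \<bind> K)) \<noteq> \<infinity>" for g
    using that measurable_compose[OF K nn_integral_measurable_subprob_algebra[OF that(1)]]
    by (intro nn_integral_PInf_AE) (simp_all add: nn_integral_bind[OF _ K])
  from this[of "\<lambda>x. ennreal (f x)"] this[of "\<lambda>x. ennreal (- f x)"]
  have "AE s in P. (\<integral>\<^sup>+x. ennreal (f x) \<partial>K s) \<noteq> \<infinity>" "AE s in P. (\<integral>\<^sup>+x. ennreal (- f x) \<partial>K s) \<noteq> \<infinity>"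
    using f int by (auto simp: real_integrable_def)
  with AE_space show ?thesis
    by eventually_elim (use f K in \<open>auto simp: real_integrable_def subprob_measurableD\<close>)
qed

section \<open>The law of \<open>r + \<gamma> v\<close> under two independent kernels\<close>

locale separable_kernel_pair =
  fixes C :: "'b::real_normed_vector set" and Rk Vk :: "'s::topological_space \<Rightarrow> 'b measure"
  assumes closed_C: "closed C" and separable_C: "\<exists>D. countable D \<and> C \<subseteq> closure D"
    and measurable_Rk: "Rk \<in> borel \<rightarrow>\<^sub>M prob_algebra borel"
    and measurable_Vk: "Vk \<in> borel \<rightarrow>\<^sub>M prob_algebra borel"
    and AE_Rk_in_C: "AE r in Rk s. r \<in> C" and AE_Vk_in_C: "AE v in Vk s. v \<in> C"
begin

definition sum_law :: "real \<Rightarrow> 's \<Rightarrow> 'b measure" where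
  "sum_law \<gamma> s = distr (completion (Rk s \<Otimes>\<^sub>M Vk s)) borel (\<lambda>(r, v). r + \<gamma> *\<^sub>R v)"

text \<open>In a non-separable space \<open>(r, v) \<mapsto> r + \<gamma> v\<close> need not be measurable for
  \<open>borel \<Otimes>\<^sub>M borel\<close>; cut down to the separable support \<open>C \<times> C\<close> it is.\<close>
definition sum_integrand :: "real \<Rightarrow> ('b \<Rightarrow> ennreal) \<Rightarrow> 'b \<times> 'b \<Rightarrow> ennreal" where
  "sum_integrand \<gamma> \<phi> = (\<lambda>(r, v). \<phi> (r + \<gamma> *\<^sub>R v) * indicator (C \<times> C) (r, v))"

lemma prob_space_Rk: "prob_space (Rk s)" and sets_Rk: "sets (Rk s) = sets borel"
  using measurable_space[OF measurable_Rk, of s] by (auto simp: space_prob_algebra)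

lemma prob_space_Vk: "prob_space (Vk s)" and sets_Vk: "sets (Vk s) = sets borel"
  using measurable_space[OF measurable_Vk, of s] by (auto simp: space_prob_algebra)

lemma sets_pair_Rk_Vk: "sets (Rk s \<Otimes>\<^sub>M Vk s) = sets (borel \<Otimes>\<^sub>M borel)"
  using sets_Rk sets_Vk by (intro sets_pair_measure_cong)

lemma space_pair_Rk_Vk: "space (Rk s \<Otimes>\<^sub>M Vk s) = UNIV"
  using sets_eq_imp_space_eq[OF sets_pair_Rk_Vk] by (simp add: space_pair_measure)

lemma C_Times_C_in_sets: "C \<times> C \<in> sets (borel \<Otimes>\<^sub>M borel)"
  using closed_C by (auto intro!: pair_measureI borel_closed)

lemma AE_pair_in_C: "AE x in Rk s \<Otimes>\<^sub>M Vk s. x \<in> C \<times> C"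
proof -
  interpret pair_prob_space "Rk s" "Vk s"
    using prob_space_Rk prob_space_Vk by (simp add: pair_prob_space_def pair_sigma_finite_def
        prob_space_imp_sigma_finite)
  have "AE r in Rk s. AE v in Vk s. (r, v) \<in> C \<times> C"
    using AE_Rk_in_C by eventually_elim (use AE_Vk_in_C in \<open>auto elim: eventually_mono\<close>)
  then show ?thesis
    using C_Times_C_in_sets sets_pair_Rk_Vk space_pair_Rk_Vk by (intro AE_pair_measure) auto
qed

lemma measurable_sum_restrict:
  "(\<lambda>(r, v). r + \<gamma> *\<^sub>R v) \<in> restrict_space (borel \<Otimes>\<^sub>M borel) (C \<times> C) \<rightarrow>\<^sub>M borel"
  using separable_C
  by (auto intro!: borel_measurable_restrict_Times_separable continuous_intros simp: split_beta)

lemma measurable_sum_completion: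
  "(\<lambda>(r, v). r + \<gamma> *\<^sub>R v) \<in> completion (Rk s \<Otimes>\<^sub>M Vk s) \<rightarrow>\<^sub>M borel"
proof (rule measurable_completion_AE_restrict[OF _ AE_pair_in_C])
  show "C \<times> C \<in> sets (Rk s \<Otimes>\<^sub>M Vk s)"
    using C_Times_C_in_sets sets_pair_Rk_Vk by simp
  show "(\<lambda>(r, v). r + \<gamma> *\<^sub>R v) \<in> restrict_space (Rk s \<Otimes>\<^sub>M Vk s) (C \<times> C) \<rightarrow>\<^sub>M borel"
    using measurable_sum_restrict
    by (subst measurable_cong_sets[OF sets_restrict_space_cong[OF sets_pair_Rk_Vk] refl])
qed simp

lemma prob_space_sum_law: "prob_space (sum_law \<gamma> s)"
  unfolding sum_law_def using prob_space_Rk prob_space_Vk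
  by (intro prob_space.prob_space_distr prob_space.prob_space_completion prob_space_pair
      measurable_sum_completion)

lemma sets_sum_law[measurable_cong]: "sets (sum_law \<gamma> s) = sets borel"
  by (simp add: sum_law_def)

lemma borel_measurable_sum_integrand:
  assumes "\<phi> \<in> borel_measurable borel"
  shows "sum_integrand \<gamma> \<phi> \<in> borel_measurable (borel \<Otimes>\<^sub>M borel)"
proof -
  have "(\<lambda>x. \<phi> (case x of (r, v) \<Rightarrow> r + \<gamma> *\<^sub>R v))
      \<in> borel_measurable (restrict_space (borel \<Otimes>\<^sub>M borel) (C \<times> C))"
    using measurable_comp[OF measurable_sum_restrict assms] by (simp add: comp_def)
  then show ?thesis
    using C_Times_C_in_sets unfolding sum_integrand_def
    by (subst (asm) borel_measurable_restrict_space_iff_ennreal)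
      (auto simp: space_pair_measure split_beta')
qed

lemma borel_measurable_sum_integrand_pair:
  assumes "\<phi> \<in> borel_measurable borel"
  shows "sum_integrand \<gamma> \<phi> \<in> borel_measurable (Rk s \<Otimes>\<^sub>M Vk s)"
  using borel_measurable_sum_integrand[OF assms] measurable_cong_sets[OF sets_pair_Rk_Vk refl]
  by blast

lemma nn_integral_sum_law_pair:
  assumes "\<phi> \<in> borel_measurable borel"
  shows "(\<integral>\<^sup>+x. \<phi> x \<partial>sum_law \<gamma> s) = (\<integral>\<^sup>+x. sum_integrand \<gamma> \<phi> x \<partial>(Rk s \<Otimes>\<^sub>M Vk s))"
proof -
  have "(\<integral>\<^sup>+x. \<phi> x \<partial>sum_law \<gamma> s) = (\<integral>\<^sup>+(r, v). \<phi> (r + \<gamma> *\<^sub>R v) \<partial>completion (Rk s \<Otimes>\<^sub>M Vk s))"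
    unfolding sum_law_def using assms measurable_sum_completion
    by (simp add: nn_integral_distr split_beta')
  also have "\<dots> = (\<integral>\<^sup>+x. sum_integrand \<gamma> \<phi> x \<partial>completion (Rk s \<Otimes>\<^sub>M Vk s))"
    using AE_completion[OF AE_pair_in_C[of s]]
    by (intro nn_integral_cong_AE) (auto simp: sum_integrand_def elim!: eventually_mono)
  finally show ?thesis
    by (simp add: nn_integral_completion)
qed

lemma nn_integral_sum_law:
  assumes "\<phi> \<in> borel_measurable borel"
  shows "(\<integral>\<^sup>+x. \<phi> x \<partial>sum_law \<gamma> s) = (\<integral>\<^sup>+r. \<integral>\<^sup>+v. sum_integrand \<gamma> \<phi> (r, v) \<partial>Vk s \<partial>Rk s)"
proof -
  interpret Vk: prob_space "Vk s"
    by (rule prob_space_Vk)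
  show ?thesis
    using borel_measurable_sum_integrand_pair[OF assms]
    unfolding nn_integral_sum_law_pair[OF assms] by (rule Vk.nn_integral_fst[symmetric])
qed

lemma borel_measurable_inner_sum_integrand:
  assumes "\<phi> \<in> borel_measurable borel"
  shows "(\<lambda>r. \<integral>\<^sup>+v. sum_integrand \<gamma> \<phi> (r, v) \<partial>Vk s) \<in> borel_measurable (Rk s)"
proof -
  interpret Vk: prob_space "Vk s"
    by (rule prob_space_Vk)
  show ?thesis
    using borel_measurable_sum_integrand_pair[OF assms]
    by (rule Vk.borel_measurable_nn_integral_fst)
qed

lemma AE_inner_sum_integrand_eq:
  "AE r in Rk s. (\<integral>\<^sup>+v. sum_integrand \<gamma> \<phi> (r, v) \<partial>Vk s) = (\<integral>\<^sup>+v. \<phi> (r + \<gamma> *\<^sub>R v) \<partial>Vk s)"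
  using AE_Rk_in_C
proof eventually_elim
  case (elim r)
  then show ?case
    unfolding sum_integrand_def
    by (intro nn_integral_cong_AE) (use AE_Vk_in_C[of s] in \<open>auto elim!: eventually_mono\<close>)
qed

lemma measurable_sum_law: "sum_law \<gamma> \<in> borel \<rightarrow>\<^sub>M subprob_algebra borel"
proof (rule measurable_subprob_algebra)
  show "subprob_space (sum_law \<gamma> s)" for s
    using prob_space_sum_law prob_space_imp_subprob_space by blast
  fix A :: "'b set" assume "A \<in> sets borel"
  have "(\<lambda>s. \<integral>\<^sup>+x. sum_integrand \<gamma> (indicator A) x \<partial>(Rk s \<Otimes>\<^sub>M Vk s)) \<in> borel_measurable borel"
    using measurable_compose[OF measurable_pair_measure[OF measurable_prob_algebraD[OF measurable_Rk]
          measurable_prob_algebraD[OF measurable_Vk]]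
        nn_integral_measurable_subprob_algebra[OF borel_measurable_sum_integrand]] \<open>A \<in> sets borel\<close>
    by simp
  then show "(\<lambda>s. emeasure (sum_law \<gamma> s) A) \<in> borel_measurable borel"
    using \<open>A \<in> sets borel\<close> by (simp add: nn_integral_sum_law_pair[symmetric])
qed (rule sets_sum_law)

lemma AE_integrable_sum_law:
  fixes F :: "'b \<Rightarrow> real"
  assumes F: "F \<in> borel_measurable borel" and int: "integrable (sum_law \<gamma> s) F"
  shows "AE r in Rk s. integrable (Vk s) (\<lambda>v. F (r + \<gamma> *\<^sub>R v))"
proof -
  have shifted_F: "(\<lambda>v. F (r + \<gamma> *\<^sub>R v)) \<in> borel_measurable (Vk s)" for r
    using F by (simp add: measurable_cong_sets[OF sets_Vk refl])
  have "AE r in Rk s. (\<integral>\<^sup>+v. \<phi> (r + \<gamma> *\<^sub>R v) \<partial>Vk s) \<noteq> \<infinity>"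
    if "\<phi> \<in> borel_measurable borel" "(\<integral>\<^sup>+x. \<phi> x \<partial>sum_law \<gamma> s) \<noteq> \<infinity>" for \<phi>
  proof -
    have "AE r in Rk s. (\<integral>\<^sup>+v. sum_integrand \<gamma> \<phi> (r, v) \<partial>Vk s) \<noteq> \<infinity>"
      using that borel_measurable_inner_sum_integrand[OF that(1)]
      by (intro nn_integral_PInf_AE) (simp_all add: nn_integral_sum_law)
    with AE_inner_sum_integrand_eq[where \<gamma> = \<gamma> and \<phi> = \<phi>] show ?thesis
      by eventually_elim simp
  qed
  from this[of "\<lambda>x. ennreal (F x)"] this[of "\<lambda>x. ennreal (- F x)"]
  have "AE r in Rk s. (\<integral>\<^sup>+v. ennreal (F (r + \<gamma> *\<^sub>R v)) \<partial>Vk s) \<noteq> \<infinity>"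
    "AE r in Rk s. (\<integral>\<^sup>+v. ennreal (- F (r + \<gamma> *\<^sub>R v)) \<partial>Vk s) \<noteq> \<infinity>"
    using F int by (auto simp: real_integrable_def)
  then show ?thesis
    by (auto simp: real_integrable_def shifted_F elim!: eventually_rev_mp)
qed

end

lemma nn_integral_diff_le_sum_law:
  assumes k1: "separable_kernel_pair C Rk V1" and k2: "separable_kernel_pair C Rk V2"
    and F: "F \<in> borel_measurable borel"
    and diff_le: "AE r in Rk s. nn_integral_diff_le (V1 s) (V2 s) (\<lambda>v. F (r + \<gamma> *\<^sub>R v)) c"
  shows "nn_integral_diff_le (separable_kernel_pair.sum_law Rk V1 \<gamma> s)
           (separable_kernel_pair.sum_law Rk V2 \<gamma> s) F c"
proof -
  interpret k1: separable_kernel_pair C Rk V1 by (rule k1)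
  interpret k2: separable_kernel_pair C Rk V2 by (rule k2)
  have F_pm: "(\<lambda>x. ennreal (F x)) \<in> borel_measurable borel"
    "(\<lambda>x. ennreal (- F x)) \<in> borel_measurable borel"
    using F by measurable
  note inner_eq = k1.AE_inner_sum_integrand_eq[where s = s and \<gamma> = \<gamma>]
    k2.AE_inner_sum_integrand_eq[where s = s and \<gamma> = \<gamma>]
  show ?thesis
    using diff_le inner_eq[of "\<lambda>x. ennreal (F x)"] inner_eq[of "\<lambda>x. ennreal (- F x)"]
    unfolding nn_integral_diff_le_def k1.nn_integral_sum_law[OF F_pm(1)]
      k1.nn_integral_sum_law[OF F_pm(2)] k2.nn_integral_sum_law[OF F_pm(1)]
      k2.nn_integral_sum_law[OF F_pm(2)]
    by (intro nn_integral_add_le_AE k1.prob_space_Rk k1.borel_measurable_inner_sum_integrand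
        k2.borel_measurable_inner_sum_integrand F_pm) (auto elim!: eventually_rev_mp)
qed

lemma integral_bind_sum_law_diff_le:
  fixes F :: "'b::real_normed_vector \<Rightarrow> real" and P :: "'s::topological_space measure"
  assumes k1: "separable_kernel_pair C Rk V1" and k2: "separable_kernel_pair C Rk V2"
    and P: "prob_space P" "sets P = sets borel"
    and F: "F \<in> borel_measurable borel"
    and int1: "integrable (P \<bind> separable_kernel_pair.sum_law Rk V1 \<gamma>) F"
    and int2: "integrable (P \<bind> separable_kernel_pair.sum_law Rk V2 \<gamma>) F"
    and "0 \<le> c"
    and shifted_diff_le: "\<And>s r. integrable (V1 s) (\<lambda>v. F (r + \<gamma> *\<^sub>R v)) \<Longrightarrow>
      integrable (V2 s) (\<lambda>v. F (r + \<gamma> *\<^sub>R v)) \<Longrightarrow>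
      (\<integral>v. F (r + \<gamma> *\<^sub>R v) \<partial>V1 s) - (\<integral>v. F (r + \<gamma> *\<^sub>R v) \<partial>V2 s) \<le> c"
  shows "(\<integral>x. F x \<partial>(P \<bind> separable_kernel_pair.sum_law Rk V1 \<gamma>))
       - (\<integral>x. F x \<partial>(P \<bind> separable_kernel_pair.sum_law Rk V2 \<gamma>)) \<le> c"
proof -
  interpret k1: separable_kernel_pair C Rk V1 by (rule k1)
  interpret k2: separable_kernel_pair C Rk V2 by (rule k2)
  have K1: "k1.sum_law \<gamma> \<in> P \<rightarrow>\<^sub>M subprob_algebra borel"
    using k1.measurable_sum_law measurable_cong_sets[OF P(2) refl] by blast
  have K2: "k2.sum_law \<gamma> \<in> P \<rightarrow>\<^sub>M subprob_algebra borel"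
    using k2.measurable_sum_law measurable_cong_sets[OF P(2) refl] by blast
  have "AE s in P. integrable (k1.sum_law \<gamma> s) F" "AE s in P. integrable (k2.sum_law \<gamma> s) F"
    using AE_integrable_bind[OF P(1) K1 int1] AE_integrable_bind[OF P(1) K2 int2] .
  then have "AE s in P. nn_integral_diff_le (k1.sum_law \<gamma> s) (k2.sum_law \<gamma> s) F c"
  proof eventually_elim
    case (elim s)
    have "AE r in Rk s. integrable (V1 s) (\<lambda>v. F (r + \<gamma> *\<^sub>R v))"
      "AE r in Rk s. integrable (V2 s) (\<lambda>v. F (r + \<gamma> *\<^sub>R v))"
      using k1.AE_integrable_sum_law[OF F elim(1)] k2.AE_integrable_sum_law[OF F elim(2)] .
    then have "AE r in Rk s. nn_integral_diff_le (V1 s) (V2 s) (\<lambda>v. F (r + \<gamma> *\<^sub>R v)) c"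
      by eventually_elim (simp add: nn_integral_diff_le_iff shifted_diff_le \<open>0 \<le> c\<close>)
    then show ?case
      by (rule nn_integral_diff_le_sum_law[OF k1 k2 F])
  qed
  then have "nn_integral_diff_le (P \<bind> k1.sum_law \<gamma>) (P \<bind> k2.sum_law \<gamma>) F c"
    by (rule nn_integral_diff_le_bind[OF P(1) K1 K2 F])
  then show ?thesis
    using int1 int2 \<open>0 \<le> c\<close> by (simp add: nn_integral_diff_le_iff)
qed

section \<open>Contraction in the bounded-Lipschitz distance\<close>

lemma dBL_nonneg:
  assumes "prob_space U" "prob_space W"
  shows "0 \<le> dBL U W"
proof -
  have "ereal ((\<integral>x. 0 \<partial>U) - (\<integral>x. 0 \<partial>W)) \<le> dBL U W"
    unfolding dBL_def by (rule SUP_upper) (auto intro: lipschitz_on_mono[OF lipschitz_on_constant])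
  then show ?thesis
    by (simp add: zero_ereal_def)
qed

lemma integral_shifted_diff_le_dBL:
  fixes F :: "'b::real_normed_vector \<Rightarrow> real"
  assumes V: "prob_space V1" "prob_space V2" and "0 \<le> \<gamma>" and F: "1-lipschitz_on UNIV F"
    and int: "integrable V1 (\<lambda>v. F (r + \<gamma> *\<^sub>R v))" "integrable V2 (\<lambda>v. F (r + \<gamma> *\<^sub>R v))"
  shows "ereal ((\<integral>v. F (r + \<gamma> *\<^sub>R v) \<partial>V1) - (\<integral>v. F (r + \<gamma> *\<^sub>R v) \<partial>V2)) \<le> ereal \<gamma> * dBL V1 V2"
proof (cases "\<gamma> = 0")
  case True
  then show ?thesis
    using V by (simp add: prob_space.prob_space zero_ereal_def[symmetric])
next
  case False
  with \<open>0 \<le> \<gamma>\<close> have "0 < \<gamma>" by simp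
  define h where "h v = F (r + \<gamma> *\<^sub>R v) / \<gamma>" for v
  have "1-lipschitz_on UNIV h"
  proof (rule lipschitz_onI)
    fix x y :: 'b
    have "dist (h x) (h y) = dist (F (r + \<gamma> *\<^sub>R x)) (F (r + \<gamma> *\<^sub>R y)) / \<gamma>"
      using \<open>0 < \<gamma>\<close> by (simp add: h_def dist_real_def diff_divide_distrib[symmetric])
    also have "\<dots> \<le> dist (r + \<gamma> *\<^sub>R x) (r + \<gamma> *\<^sub>R y) / \<gamma>"
      using lipschitz_onD[OF F, of "r + \<gamma> *\<^sub>R x" "r + \<gamma> *\<^sub>R y"] \<open>0 < \<gamma>\<close>
      by (simp add: divide_right_mono)
    also have "\<dots> = 1 * dist x y"
      using \<open>0 < \<gamma>\<close> by (simp add: dist_norm scaleR_diff_right[symmetric])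
    finally show "dist (h x) (h y) \<le> 1 * dist x y" .
  qed simp
  moreover have "integrable V1 h" "integrable V2 h"
    unfolding h_def using int by auto
  ultimately have "ereal ((\<integral>v. h v \<partial>V1) - (\<integral>v. h v \<partial>V2)) \<le> dBL V1 V2"
    unfolding dBL_def by (intro SUP_upper) simp
  then have "ereal \<gamma> * ereal ((\<integral>v. h v \<partial>V1) - (\<integral>v. h v \<partial>V2)) \<le> ereal \<gamma> * dBL V1 V2"
    using \<open>0 \<le> \<gamma>\<close> by (intro ereal_mult_left_mono) auto
  moreover have "\<gamma> * ((\<integral>v. h v \<partial>V1) - (\<integral>v. h v \<partial>V2))
      = (\<integral>v. F (r + \<gamma> *\<^sub>R v) \<partial>V1) - (\<integral>v. F (r + \<gamma> *\<^sub>R v) \<partial>V2)"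
    using \<open>0 < \<gamma>\<close> by (simp add: h_def right_diff_distrib)
  ultimately show ?thesis
    by simp
qed

lemma dBL_bind_sum_law_le:
  fixes P :: "'s::topological_space measure"
  assumes k1: "separable_kernel_pair C Rk V1" and k2: "separable_kernel_pair C Rk V2"
    and P: "prob_space P" "sets P = sets borel" and "0 \<le> \<gamma>"
    and B: "\<And>s. dBL (V1 s) (V2 s) \<le> B"
  shows "dBL (P \<bind> separable_kernel_pair.sum_law Rk V1 \<gamma>) (P \<bind> separable_kernel_pair.sum_law Rk V2 \<gamma>)
           \<le> ereal \<gamma> * B"
proof (cases "ereal \<gamma> * B = \<infinity>")
  case False
  interpret k1: separable_kernel_pair C Rk V1 by (rule k1)
  interpret k2: separable_kernel_pair C Rk V2 by (rule k2)
  have "0 \<le> B"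
    using dBL_nonneg[OF k1.prob_space_Vk k2.prob_space_Vk] B order_trans by blast
  then have "0 \<le> ereal \<gamma> * B"
    using \<open>0 \<le> \<gamma>\<close> by simp
  with False obtain c where c: "ereal \<gamma> * B = ereal c" "0 \<le> c"
    by (cases "ereal \<gamma> * B") auto
  show ?thesis
    unfolding dBL_def c(1)
  proof (rule SUP_least, clarify)
    fix F :: "_ \<Rightarrow> real"
    assume F: "1-lipschitz_on UNIV F" and "integrable (P \<bind> k1.sum_law \<gamma>) F"
      "integrable (P \<bind> k2.sum_law \<gamma>) F"
    moreover have "F \<in> borel_measurable borel"
      using F by (intro borel_measurable_continuous_onI lipschitz_on_continuous_on)
    moreover have "(\<integral>v. F (r + \<gamma> *\<^sub>R v) \<partial>V1 s) - (\<integral>v. F (r + \<gamma> *\<^sub>R v) \<partial>V2 s) \<le> c"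
      if "integrable (V1 s) (\<lambda>v. F (r + \<gamma> *\<^sub>R v))" "integrable (V2 s) (\<lambda>v. F (r + \<gamma> *\<^sub>R v))"
      for s r
    proof -
      have "ereal ((\<integral>v. F (r + \<gamma> *\<^sub>R v) \<partial>V1 s) - (\<integral>v. F (r + \<gamma> *\<^sub>R v) \<partial>V2 s))
          \<le> ereal \<gamma> * dBL (V1 s) (V2 s)"
        by (rule integral_shifted_diff_le_dBL[OF k1.prob_space_Vk k2.prob_space_Vk \<open>0 \<le> \<gamma>\<close> F that])
      also have "\<dots> \<le> ereal c"
        unfolding c(1)[symmetric] using B \<open>0 \<le> \<gamma>\<close> by (intro ereal_mult_left_mono) auto
      finally show ?thesis
        by simp
    qed
    ultimately show "ereal ((\<integral>x. F x \<partial>(P \<bind> k1.sum_law \<gamma>)) - (\<integral>x. F x \<partial>(P \<bind> k2.sum_law \<gamma>)))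
        \<le> ereal c"
      using integral_bind_sum_law_diff_le[OF k1 k2 P] \<open>0 \<le> c\<close> by simp
  qed
qed (metis ereal_less_eq(1))

theorem theorem4:
  fixes Act :: "'a::banach set"
    and X :: "('a \<times> 's::{banach, second_countable_topology}) set"
    and B0 :: "'b::banach set"
    and P :: "'s \<Rightarrow> 'a \<Rightarrow> 's measure"
    and R :: "'s \<Rightarrow> 'a \<Rightarrow> 's \<Rightarrow> 'b measure"
    and V1 V2 :: "'s \<Rightarrow> 'a \<Rightarrow> 'b measure"
    and \<pi> :: "'s \<Rightarrow> 'a"
    and \<gamma> :: real
  assumes Act_compact: "compact Act"
    and X_sub: "X \<subseteq> Act \<times> UNIV"
    and X_closed: "closed X"
    and B0_separable: "\<exists>D. countable D \<and> D \<subseteq> B0 \<and> B0 \<subseteq> closure D"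
    and P_prob: "\<And>a s. (a, s) \<in> X \<Longrightarrow> prob_space (P s a) \<and> sets (P s a) = sets borel"
    and R_prob: "\<And>a s s'. (a, s) \<in> X \<Longrightarrow>
                   prob_space (R s a s') \<and> sets (R s a s') = sets borel \<and>
                   (AE x in R s a s'. x \<in> B0)"
    and R_kernel: "\<And>a s. (a, s) \<in> X \<Longrightarrow> (\<lambda>s'. R s a s') \<in> borel \<rightarrow>\<^sub>M prob_algebra borel"
    and \<pi>_feasible: "\<And>s'. (\<pi> s', s') \<in> X"
    and \<gamma>: "0 \<le> \<gamma>" "\<gamma> < 1"
    and V1_prob: "\<And>a s. (a, s) \<in> X \<Longrightarrow>
                   prob_space (V1 s a) \<and> sets (V1 s a) = sets borel \<and> (AE x in V1 s a. x \<in> B0)"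
    and V2_prob: "\<And>a s. (a, s) \<in> X \<Longrightarrow>
                   prob_space (V2 s a) \<and> sets (V2 s a) = sets borel \<and> (AE x in V2 s a. x \<in> B0)"
    and V1_kernel: "(\<lambda>s'. V1 s' (\<pi> s')) \<in> borel \<rightarrow>\<^sub>M prob_algebra borel"
    and V2_kernel: "(\<lambda>s'. V2 s' (\<pi> s')) \<in> borel \<rightarrow>\<^sub>M prob_algebra borel"
  shows "(SUP (a, s) \<in> X. dBL (Zlaw P R V1 \<pi> \<gamma> s a) (Zlaw P R V2 \<pi> \<gamma> s a))
           \<le> ereal \<gamma> * (SUP (a, s) \<in> X. dBL (V1 s a) (V2 s a))"
proof -
  obtain D where D: "countable D" "D \<subseteq> B0" "B0 \<subseteq> closure D"
    using B0_separable by blast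
  have kernel_pair: "separable_kernel_pair (closure D) (R s a) V"
    if "(a, s) \<in> X" "V \<in> borel \<rightarrow>\<^sub>M prob_algebra borel" "\<And>s'. AE v in V s'. v \<in> B0" for a s V
  proof
    show "AE r in R s a s'. r \<in> closure D" for s'
      using R_prob[OF that(1), of s'] D(3) by (auto elim!: eventually_mono)
    show "AE v in V s'. v \<in> closure D" for s'
      using that(3)[of s'] D(3) by (auto elim!: eventually_mono)
  qed (use D(1) R_kernel[OF that(1)] that(2) in auto)
  define dV where "dV = (SUP (a, s) \<in> X. dBL (V1 s a) (V2 s a))"
  have "dBL (Zlaw P R V1 \<pi> \<gamma> s a) (Zlaw P R V2 \<pi> \<gamma> s a) \<le> ereal \<gamma> * dV" if "(a, s) \<in> X" for a s
  proof -
    have k1: "separable_kernel_pair (closure D) (R s a) (\<lambda>s'. V1 s' (\<pi> s'))"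
      using kernel_pair[OF that V1_kernel] V1_prob[OF \<pi>_feasible] by blast
    have k2: "separable_kernel_pair (closure D) (R s a) (\<lambda>s'. V2 s' (\<pi> s'))"
      using kernel_pair[OF that V2_kernel] V2_prob[OF \<pi>_feasible] by blast
    have "dBL (V1 s' (\<pi> s')) (V2 s' (\<pi> s')) \<le> dV" for s'
      unfolding dV_def using \<pi>_feasible[of s'] by (rule SUP_upper2) simp
    then show ?thesis
      using dBL_bind_sum_law_le[OF k1 k2 _ _ \<gamma>(1)] P_prob[OF that]
      by (simp add: Zlaw_def separable_kernel_pair.sum_law_def[OF k1, abs_def]
          separable_kernel_pair.sum_law_def[OF k2, abs_def])
  qed
  then show ?thesis
    unfolding dV_def by (auto intro!: SUP_least)
qed

end
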